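(* Let $n\ge 1$, let $\mathcal{C}$ be a set of conditions, let $\varnothing\notin\mathcal{C}$ denote the null condition, fix $c\in\mathcal{C}$, let $N=2^m$ with $m\ge 1$ an integer, and set $d=1/N$. Let $s:\mathbb{R}^n\times[0,1]\times(\mathcal{C}\cup\{\varnothing\})\times(0,1]\to\mathbb{R}^n$ be any function, and for real $\omega$ define $g^{\omega}(x,t,c,\delta)=\omega\, s(x,t,c,\delta)+(1-\omega)\, s(x,t,\varnothing,\delta)$. Fix $w\in\mathbb{R}$ and points $y_0,\dots,y_N\in\mathbb{R}^n$, and assume that for every $j\in\{0,\dots,m-1\}$ and every index $i\in\{0,\dots,N-1\}$ that is a multiple of $2^{j+1}$, $$s\!\left(y_i,\tfrac{i}{N},c,2^{j+1}d\right)=\tfrac12\Big[g^{w}\!\left(y_i,\tfrac{i}{N},c,2^{j}d\right)+g^{w}\!\left(y_{i+2^j},\tfrac{i+2^j}{N},c,2^{j}d\right)\Big],$$ $$s\!\left(y_i,\tfrac{i}{N},\varnothing,2^{j+1}d\right)=\tfrac12\Big[s\!\left(y_i,\tfrac{i}{N},\varnothing,2^{j}d\right)+s\!\left(y_{i+2^j},\tfrac{i+2^j}{N},\varnothing,2^{j}d\right)\Big].$$ Then for every $j\in\{0,1,\dots,m\}$ and every index $i\in\{0,\dots,N-1\}$ that is a multiple of $2^{j}$: $$s\!\left(y_i,\tfrac{i}{N},\varnothing,2^{j}d\right)=\frac{1}{2^j}\sum_{l=0}^{2^j-1}s\!\left(y_{i+l},\tfrac{i+l}{N},\varnothing,d\right),$$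 and $$g^{w}\!\left(y_i,\tfrac{i}{N},c,2^{j}d\right)=\frac{1}{2^j}\sum_{l=0}^{2^j-1} g^{\,w^{j+1}}\!\left(y_{i+l},\tfrac{i+l}{N},c,d\right).$$
   Context: Here $s$ models a shortcut network (inputs: sample, time, condition or null condition $\varnothing$, step size) and $g^\omega$ its classifier-free-guided output with scale $\omega$, using the convention $g^\omega=\omega s(\cdot,c,\cdot)+(1-\omega)s(\cdot,\varnothing,\cdot)$. The hypotheses express exact self-consistency (zero self-consistency loss) at the given points: a step of size $2\delta$ equals the average of two consecutive steps of size $\delta$, guided with fixed scale $w$ for the conditional branch and unguided for the null-condition branch. In the paper the points are $y_0=x_0$, $y_{i+1}=y_i+s(y_i,i/N,c,d)\,d$. *)

theory Defs
  imports "HOL-Analysis.Analysis"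
begin

text \<open>Shortcut network s x t cond delta, the condition being of type 'c option:
  Some c is a genuine condition, None is the null condition.
  Classifier-free guided output with scale omega.\<close>
definition cfg ::
  "(real^'n \<Rightarrow> real \<Rightarrow> 'c option \<Rightarrow> real \<Rightarrow> real^'n) \<Rightarrow> real \<Rightarrow>
   real^'n \<Rightarrow> real \<Rightarrow> 'c \<Rightarrow> real \<Rightarrow> real^'n" where
  "cfg s \<omega> x t c \<delta> = \<omega> *\<^sub>R s x t (Some c) \<delta> + (1 - \<omega>) *\<^sub>R s x t None \<delta>"

end

theory Submission
  imports Defs
begin

text \<open>Write \<open>u i j\<close> and \<open>v i j\<close> for the unconditional and conditional outputs at the point
  \<open>y i\<close> with step \<open>2^j d\<close>. The hypotheses say that \<open>u\<close> averages pairwise along a dyadic tree,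
  so \<open>u i j\<close> is the block average of the \<open>u (i + l) 0\<close>. For the guided output
  \<open>g = w v + (1 - w) u\<close> the difference \<open>g - u = w (v - u)\<close> satisfies the same recursion with an
  extra factor \<open>w\<close> per level, so it is \<open>w^j\<close> times the block average of \<open>w (v - u)\<close> at level 0.
  Adding the two averages gives the guided output with scale \<open>w^(j+1)\<close>.\<close>

lemma sum_lessThan_double:
  "(\<Sum>l<2 * k. f l) = (\<Sum>l<k. f l) + (\<Sum>l<k. f (k + l :: nat))"
proof -
  have "(\<Sum>l<k. f (k + l)) = sum f {k..<k + k}"
    using sum.shift_bounds_nat_ivl[of f 0 k k] by (simp add: atLeast0LessThan add.commute)
  moreover have "sum f {..<k + k} = sum f {..<k} + sum f {k..<k + k}"
    by (simp add: sum.atLeastLessThan_concat flip: atLeast0LessThan)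
  ultimately show ?thesis by (simp add: mult_2)
qed

lemma add_le_of_dvd_less:
  fixes i k N :: nat
  assumes "k dvd i" "k dvd N" "i < N"
  shows "i + k \<le> N"
proof -
  have "k dvd N - i" using assms by (simp add: dvd_diff_nat)
  then have "k \<le> N - i" using \<open>i < N\<close> by (simp add: dvd_imp_le)
  then show ?thesis using \<open>i < N\<close> by simp
qed

lemma dyadic_recursion_block_sum:
  fixes f :: "nat \<Rightarrow> nat \<Rightarrow> 'a::real_vector" and a :: real
  assumes "2 ^ m dvd N"
    and rec: "\<And>j i. j < m \<Longrightarrow> i < N \<Longrightarrow> 2 ^ (j + 1) dvd i \<Longrightarrow>
      f i (j + 1) = (a / 2) *\<^sub>R (f i j + f (i + 2 ^ j) j)"
  shows "j \<le> m \<Longrightarrow> i < N \<Longrightarrow> 2 ^ j dvd i \<Longrightarrow>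
    f i j = (a ^ j / 2 ^ j) *\<^sub>R (\<Sum>l<2 ^ j. f (i + l) 0)"
proof (induction j arbitrary: i)
  case 0
  then show ?case by simp
next
  case (Suc j)
  have "2 ^ Suc j dvd N"
    using Suc.prems(1) \<open>2 ^ m dvd N\<close> le_imp_power_dvd dvd_trans by blast
  then have "i + 2 ^ Suc j \<le> N"
    using Suc.prems add_le_of_dvd_less by blast
  moreover have "(0::nat) < 2 ^ j" by simp
  ultimately have next_block: "i + 2 ^ j < N" unfolding power_Suc by linarith
  have "2 ^ j dvd i"
    using Suc.prems(3) unfolding power_Suc by (rule dvd_mult_right)
  then have left: "f i j = (a ^ j / 2 ^ j) *\<^sub>R (\<Sum>l<2 ^ j. f (i + l) 0)"
    and right: "f (i + 2 ^ j) j = (a ^ j / 2 ^ j) *\<^sub>R (\<Sum>l<2 ^ j. f (i + 2 ^ j + l) 0)"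
    using Suc next_block by simp_all
  have "f i (Suc j) = (a / 2) *\<^sub>R (f i j + f (i + 2 ^ j) j)"
    using rec[of j i] Suc.prems by simp
  also have "\<dots> = (a ^ Suc j / 2 ^ Suc j) *\<^sub>R
      ((\<Sum>l<2 ^ j. f (i + l) 0) + (\<Sum>l<2 ^ j. f (i + (2 ^ j + l)) 0))"
    unfolding left right by (simp add: scaleR_add_right add.assoc)
  also have "\<dots> = (a ^ Suc j / 2 ^ Suc j) *\<^sub>R (\<Sum>l<2 ^ Suc j. f (i + l) 0)"
    using sum_lessThan_double[of "\<lambda>l. f (i + l) 0" "2 ^ j"] by simp
  finally show ?case .
qed

lemma guided_dyadic_block_average:
  fixes u v :: "nat \<Rightarrow> nat \<Rightarrow> 'a::real_vector" and w :: real
  defines "g i j \<equiv> w *\<^sub>R v i j + (1 - w) *\<^sub>R u i j"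
  assumes "2 ^ m dvd N"
    and u_rec: "\<And>j i. j < m \<Longrightarrow> i < N \<Longrightarrow> 2 ^ (j + 1) dvd i \<Longrightarrow>
      u i (j + 1) = (1 / 2) *\<^sub>R (u i j + u (i + 2 ^ j) j)"
    and v_rec: "\<And>j i. j < m \<Longrightarrow> i < N \<Longrightarrow> 2 ^ (j + 1) dvd i \<Longrightarrow>
      v i (j + 1) = (1 / 2) *\<^sub>R (g i j + g (i + 2 ^ j) j)"
    and block: "j \<le> m" "i < N" "2 ^ j dvd i"
  shows "u i j = (1 / 2 ^ j) *\<^sub>R (\<Sum>l<2 ^ j. u (i + l) 0)"
    and "g i j = (1 / 2 ^ j) *\<^sub>R
      (\<Sum>l<2 ^ j. w ^ (j + 1) *\<^sub>R v (i + l) 0 + (1 - w ^ (j + 1)) *\<^sub>R u (i + l) 0)"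
proof -
  have "u i j = (1 ^ j / 2 ^ j) *\<^sub>R (\<Sum>l<2 ^ j. u (i + l) 0)"
    using \<open>2 ^ m dvd N\<close> u_rec block by (rule dyadic_recursion_block_sum)
  then show u_avg: "u i j = (1 / 2 ^ j) *\<^sub>R (\<Sum>l<2 ^ j. u (i + l) 0)"
    by simp
  define h where "h i j = w *\<^sub>R (v i j - u i j)" for i j
  have g_eq: "g i j = u i j + h i j" for i j
    by (simp add: g_def h_def algebra_simps)
  have h_avg: "h i j = (w ^ j / 2 ^ j) *\<^sub>R (\<Sum>l<2 ^ j. h (i + l) 0)"
  proof (rule dyadic_recursion_block_sum[OF \<open>2 ^ m dvd N\<close> _ block])
    fix j i assume "j < m" "i < N" "2 ^ (j + 1) dvd i"
    then have "v i (j + 1) = (1 / 2) *\<^sub>R ((u i j + h i j) + (u (i + 2 ^ j) j + h (i + 2 ^ j) j))"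
      and "u i (j + 1) = (1 / 2) *\<^sub>R (u i j + u (i + 2 ^ j) j)"
      using u_rec v_rec by (simp_all add: g_eq)
    then show "h i (j + 1) = (w / 2) *\<^sub>R (h i j + h (i + 2 ^ j) j)"
      unfolding h_def[of i "j + 1"] by (simp add: algebra_simps)
  qed
  have level0: "w ^ (j + 1) *\<^sub>R v l 0 + (1 - w ^ (j + 1)) *\<^sub>R u l 0 = u l 0 + w ^ j *\<^sub>R h l 0"
    for l
    by (simp add: h_def algebra_simps)
  have "g i j = u i j + h i j"
    by (rule g_eq)
  also have "\<dots> = (1 / 2 ^ j) *\<^sub>R (\<Sum>l<2 ^ j. u (i + l) 0 + w ^ j *\<^sub>R h (i + l) 0)"
    unfolding u_avg h_avg by (simp add: sum.distrib scaleR_sum_right scaleR_add_right)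
  finally show "g i j = (1 / 2 ^ j) *\<^sub>R
      (\<Sum>l<2 ^ j. w ^ (j + 1) *\<^sub>R v (i + l) 0 + (1 - w ^ (j + 1)) *\<^sub>R u (i + l) 0)"
    by (simp only: level0)
qed

theorem mainTheorem2:
  fixes s :: "real^'n \<Rightarrow> real \<Rightarrow> 'c option \<Rightarrow> real \<Rightarrow> real^'n"
    and C :: "'c set" and c :: 'c and m N :: nat and d w :: real
    and y :: "nat \<Rightarrow> real^'n"
  assumes "c \<in> C" and "m \<ge> 1" and "N = 2 ^ m" and "d = 1 / real N"
    and hc: "\<And>j i. j < m \<Longrightarrow> i < N \<Longrightarrow> 2 ^ (j + 1) dvd i \<Longrightarrow>
      s (y i) (real i / real N) (Some c) (2 ^ (j + 1) * d) =
        (1 / 2) *\<^sub>R (cfg s w (y i) (real i / real N) c (2 ^ j * d) +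
          cfg s w (y (i + 2 ^ j)) (real (i + 2 ^ j) / real N) c (2 ^ j * d))"
    and hnull: "\<And>j i. j < m \<Longrightarrow> i < N \<Longrightarrow> 2 ^ (j + 1) dvd i \<Longrightarrow>
      s (y i) (real i / real N) None (2 ^ (j + 1) * d) =
        (1 / 2) *\<^sub>R (s (y i) (real i / real N) None (2 ^ j * d) +
          s (y (i + 2 ^ j)) (real (i + 2 ^ j) / real N) None (2 ^ j * d))"
  shows "\<forall>j \<le> m. \<forall>i < N. 2 ^ j dvd i \<longrightarrow>
      s (y i) (real i / real N) None (2 ^ j * d) =
        (1 / 2 ^ j) *\<^sub>R (\<Sum>l < 2 ^ j. s (y (i + l)) (real (i + l) / real N) None d)
    \<and> cfg s w (y i) (real i / real N) c (2 ^ j * d) =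
        (1 / 2 ^ j) *\<^sub>R (\<Sum>l < 2 ^ j. cfg s (w ^ (j + 1)) (y (i + l)) (real (i + l) / real N) c d)"
proof (intro allI impI conjI)
  fix j i assume block: "j \<le> m" "i < N" "2 ^ j dvd i"
  define u where "u i j = s (y i) (real i / real N) None (2 ^ j * d)" for i j
  define v where "v i j = s (y i) (real i / real N) (Some c) (2 ^ j * d)" for i j
  have cfg_uv: "cfg s a (y i) (real i / real N) c (2 ^ j * d) = a *\<^sub>R v i j + (1 - a) *\<^sub>R u i j"
    for a i j
    by (simp add: cfg_def u_def v_def)
  have cfg_level0: "cfg s a (y i) (real i / real N) c d = a *\<^sub>R v i 0 + (1 - a) *\<^sub>R u i 0" for a i
    by (simp add: cfg_def u_def v_def)
  have "2 ^ m dvd N" using \<open>N = 2 ^ m\<close> by simp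
  note averages = guided_dyadic_block_average[where u = u and v = v and w = w, OF this _ _ block]
  have u_rec: "u i (j + 1) = (1 / 2) *\<^sub>R (u i j + u (i + 2 ^ j) j)"
    and v_rec: "v i (j + 1) = (1 / 2) *\<^sub>R
      ((w *\<^sub>R v i j + (1 - w) *\<^sub>R u i j) + (w *\<^sub>R v (i + 2 ^ j) j + (1 - w) *\<^sub>R u (i + 2 ^ j) j))"
    if "j < m" "i < N" "2 ^ (j + 1) dvd i" for j i
    using hnull[OF that] hc[OF that] unfolding cfg_uv by (simp_all add: u_def v_def)
  show "s (y i) (real i / real N) None (2 ^ j * d) =
      (1 / 2 ^ j) *\<^sub>R (\<Sum>l<2 ^ j. s (y (i + l)) (real (i + l) / real N) None d)"
    using averages(1)[OF u_rec v_rec] by (simp add: u_def)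
  show "cfg s w (y i) (real i / real N) c (2 ^ j * d) =
      (1 / 2 ^ j) *\<^sub>R (\<Sum>l<2 ^ j. cfg s (w ^ (j + 1)) (y (i + l)) (real (i + l) / real N) c d)"
    unfolding cfg_uv cfg_level0 by (rule averages(2)[OF u_rec v_rec])
qed

end
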